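(* Let $p$ be a positive stochastic choice function on a finite set $X$ such that there exist $a,b,c\in X$ with $a\not\sim_p b$, $b\not\sim_p c$, $a\not\sim_p c$. Then $p$ satisfies ISA-1 and ISA-2 if and only if $p$ is a strict nondegenerate NSC.
   Context: $\mathscr{A}$ is the collection of nonempty subsets of $X$; $p(x,A)=0$ for $x\notin A$, $\sum_{a\in A}p(a,A)=1$, $p(a,A)>0$ for $a\in A$; $A\cup x=A\cup\{x\}$. $a\sim_p b$ means $\frac{p(a,A)}{p(b,A)}=\frac{p(a,\{a,b\})}{p(b,\{a,b\})}$ for all $A\ni a,b$. ISA-1: for any $A\in\mathscr{A}$, $a,b\in A$, $x\notin A$: if $\frac{p(a,\{a,x\})}{p(x,\{a,x\})}=\frac{p(a,\{a,b,x\})}{p(x,\{a,b,x\})}$ and $\frac{p(b,\{b,x\})}{p(x,\{b,x\})}=\frac{p(b,\{a,b,x\})}{p(x,\{a,b,x\})}$, then $\frac{p(a,A)}{p(b,A)}=\frac{p(a,A\cup x)}{p(b,A\cup x)}$. ISA-2: for any $A,B,C\in\mathscr{A}$, $a\in A\cap B$, $b\in A\cap C$, $x\in B\cap C$: if $\frac{p(a,\{a,x\})}{p(x,\{a,x\})}\ne\frac{p(a,B)}{p(x,B)}$ and $\frac{p(b,\{b,x\})}{p(x,\{b,x\})}\ne\frac{p(b,C)}{p(x,C)}$, then $\frac{p(a,A)}{p(b,A)}=\frac{p(a,A\cup x)}{p(b,A\cup x)}$. NSC: there exist a partition $X_1,\dots,X_K$ of $X$, $u:X\to\mathbb{R}_{++}$,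 $v:\bigcup_i2^{X_i}\to\mathbb{R}_+$, $v(\emptyset)=0$, with $p(a,A)=\frac{v(A\cap X_i)}{\sum_j v(A\cap X_j)}\frac{u(a)}{\sum_{b\in A\cap X_i}u(b)}$ for $a\in A\cap X_i$. Nondegenerate: at most one $i$ for which some $a\in X_i$ satisfies $\frac{\sum_{x\in A_i}u(x)}{v(A_i)}=\frac{u(a)}{v(\{a\})}$ for all $A_i\subseteq X_i$ containing $a$. Strict: for every $i$, every $A_i\subseteq X_i$, $a\in A_i$ and $x\in X_i\setminus A_i$, if $\frac{u(a)+u(x)}{u(x)}=\frac{v(\{a,x\})}{v(\{x\})}$ then $\frac{\sum_{a'\in A_i}u(a')+u(x)}{\sum_{a'\in A_i}u(a')}=\frac{v(A_i\cup x)}{v(A_i)}$. *)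

theory Defs
  imports Complex_Main "HOL-Library.Disjoint_Sets"
begin

definition menus :: "'a set \<Rightarrow> 'a set set" where
  "menus X = {A. A \<subseteq> X \<and> A \<noteq> {}}"

definition positive_scf :: "'a set \<Rightarrow> ('a \<Rightarrow> 'a set \<Rightarrow> real) \<Rightarrow> bool" where
  "positive_scf X p \<longleftrightarrow>
     (\<forall>A \<in> menus X.
        (\<forall>x. x \<notin> A \<longrightarrow> p x A = 0) \<and>
        (\<Sum>a\<in>A. p a A) = 1 \<and>
        (\<forall>a\<in>A. p a A > 0))"

definition equiv_p :: "'a set \<Rightarrow> ('a \<Rightarrow> 'a set \<Rightarrow> real) \<Rightarrow> 'a \<Rightarrow> 'a \<Rightarrow> bool" where
  "equiv_p X p a b \<longleftrightarrow>
     (\<forall>A \<in> menus X. a \<in> A \<longrightarrow> b \<in> A \<longrightarrow>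
        p a A / p b A = p a {a, b} / p b {a, b})"

definition ISA1 :: "'a set \<Rightarrow> ('a \<Rightarrow> 'a set \<Rightarrow> real) \<Rightarrow> bool" where
  "ISA1 X p \<longleftrightarrow>
     (\<forall>A \<in> menus X. \<forall>a\<in>A. \<forall>b\<in>A. \<forall>x\<in>X. x \<notin> A \<longrightarrow>
        p a {a, x} / p x {a, x} = p a {a, b, x} / p x {a, b, x} \<longrightarrow>
        p b {b, x} / p x {b, x} = p b {a, b, x} / p x {a, b, x} \<longrightarrow>
        p a A / p b A = p a (insert x A) / p b (insert x A))"

definition ISA2 :: "'a set \<Rightarrow> ('a \<Rightarrow> 'a set \<Rightarrow> real) \<Rightarrow> bool" where
  "ISA2 X p \<longleftrightarrow>
     (\<forall>A \<in> menus X. \<forall>B \<in> menus X. \<forall>C \<in> menus X.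
      \<forall>a \<in> A \<inter> B. \<forall>b \<in> A \<inter> C. \<forall>x \<in> B \<inter> C.
        p a {a, x} / p x {a, x} \<noteq> p a B / p x B \<longrightarrow>
        p b {b, x} / p x {b, x} \<noteq> p b C / p x C \<longrightarrow>
        p a A / p b A = p a (insert x A) / p b (insert x A))"

text \<open>NSC representation with partition P (the blocks X_1..X_K), u and v.
  v is only constrained on subsets of blocks (its domain in the paper).\<close>
definition NSC_rep :: "'a set \<Rightarrow> ('a \<Rightarrow> 'a set \<Rightarrow> real) \<Rightarrow> 'a set set
    \<Rightarrow> ('a \<Rightarrow> real) \<Rightarrow> ('a set \<Rightarrow> real) \<Rightarrow> bool" where
  "NSC_rep X p P u v \<longleftrightarrow>
     partition_on X P \<and>
     (\<forall>x\<in>X. u x > 0) \<and>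
     (\<forall>Y\<in>P. \<forall>S. S \<subseteq> Y \<longrightarrow> v S \<ge> 0) \<and>
     v {} = 0 \<and>
     (\<forall>A \<in> menus X. \<forall>Y \<in> P. \<forall>a \<in> A \<inter> Y.
        p a A = v (A \<inter> Y) / (\<Sum>Z\<in>P. v (A \<inter> Z)) * (u a / (\<Sum>b\<in>A \<inter> Y. u b)))"

definition NSC_degenerate_block :: "('a \<Rightarrow> real) \<Rightarrow> ('a set \<Rightarrow> real) \<Rightarrow> 'a set \<Rightarrow> bool" where
  "NSC_degenerate_block u v Y \<longleftrightarrow>
     (\<exists>a\<in>Y. \<forall>Ai. Ai \<subseteq> Y \<longrightarrow> a \<in> Ai \<longrightarrow>
        (\<Sum>x\<in>Ai. u x) / v Ai = u a / v {a})"

definition NSC_nondegenerate :: "'a set set \<Rightarrow> ('a \<Rightarrow> real) \<Rightarrow> ('a set \<Rightarrow> real) \<Rightarrow> bool" where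
  "NSC_nondegenerate P u v \<longleftrightarrow>
     (\<forall>Y\<in>P. \<forall>Z\<in>P. NSC_degenerate_block u v Y \<longrightarrow> NSC_degenerate_block u v Z \<longrightarrow> Y = Z)"

definition NSC_strict :: "'a set set \<Rightarrow> ('a \<Rightarrow> real) \<Rightarrow> ('a set \<Rightarrow> real) \<Rightarrow> bool" where
  "NSC_strict P u v \<longleftrightarrow>
     (\<forall>Y\<in>P. \<forall>Ai. Ai \<subseteq> Y \<longrightarrow> (\<forall>a\<in>Ai. \<forall>x\<in>Y - Ai.
        (u a + u x) / u x = v {a, x} / v {x} \<longrightarrow>
        ((\<Sum>a'\<in>Ai. u a') + u x) / (\<Sum>a'\<in>Ai. u a') = v (insert x Ai) / v Ai))"

definition strict_nondegenerate_NSC :: "'a set \<Rightarrow> ('a \<Rightarrow> 'a set \<Rightarrow> real) \<Rightarrow> bool" where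
  "strict_nondegenerate_NSC X p \<longleftrightarrow>
     (\<exists>P u v. NSC_rep X p P u v \<and> NSC_nondegenerate P u v \<and> NSC_strict P u v)"

end

theory Submission
  imports Defs
begin

text \<open>
  Call a and b related if their odds p a M / p b M do not depend on the menu M. ISA-1 makes this
  relation transitive, so its classes are candidates for the blocks, and ISA-2 says that adding
  an element unrelated to both a and b does not change their odds. Fixing a reference element
  unrelated to a, the odds of a against it in S plus the reference measure the weight of a within
  a set S of elements related to a; normalised by binary odds, these weights do not depend on the
  reference, because binary odds of pairwise unrelated elements multiply, and three mutually
  unrelated elements always leave a reference available. Then p a A is proportional to the weight
  of a within its class in A, and u a (the weight of a in its whole class) and v S (the total
  weight of S) give the representation. Strictness is ISA-1 applied to a new element of the class
  of a, and two degenerate blocks would make their elements related.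
  Conversely, in an NSC the odds within a block are ratios of u and do not depend on the menu,
  while the odds across blocks are a quotient of two block scores, each affected only by new
  elements of its own block; under the hypotheses of ISA-1 such an element satisfies the premise
  of strictness, which leaves the score unchanged.
\<close>

section \<open>Odds and the relation of equal odds\<close>

definition odds :: "('a \<Rightarrow> 'a set \<Rightarrow> real) \<Rightarrow> 'a \<Rightarrow> 'a \<Rightarrow> 'a set \<Rightarrow> real" where
  "odds p a b M = p a M / p b M"

lemma positive_scf_pos: "positive_scf X p \<Longrightarrow> M \<subseteq> X \<Longrightarrow> a \<in> M \<Longrightarrow> p a M > 0"
  unfolding positive_scf_def menus_def by blast

lemma positive_scf_sum: "positive_scf X p \<Longrightarrow> M \<subseteq> X \<Longrightarrow> M \<noteq> {} \<Longrightarrow> (\<Sum>a\<in>M. p a M) = 1"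
  unfolding positive_scf_def menus_def by blast

lemma odds_pos: "positive_scf X p \<Longrightarrow> M \<subseteq> X \<Longrightarrow> a \<in> M \<Longrightarrow> b \<in> M \<Longrightarrow> odds p a b M > 0"
  unfolding odds_def by (simp add: positive_scf_pos)

lemma odds_trans: "positive_scf X p \<Longrightarrow> M \<subseteq> X \<Longrightarrow> b \<in> M \<Longrightarrow> odds p a b M * odds p b c M = odds p a c M"
  unfolding odds_def using positive_scf_pos[of X p M b] by simp

lemma odds_div: "positive_scf X p \<Longrightarrow> M \<subseteq> X \<Longrightarrow> t \<in> M \<Longrightarrow> odds p a c M = odds p a t M / odds p c t M"
  unfolding odds_def using positive_scf_pos[of X p M t] by (simp add: field_simps)

lemma odds_swap: "odds p b a M = 1 / odds p a b M"
  unfolding odds_def by simp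

lemma equiv_p_refl:
  assumes "positive_scf X p"
  shows "equiv_p X p a a"
  unfolding equiv_p_def
proof (intro ballI impI)
  fix A assume "A \<in> menus X" "a \<in> A"
  then have "p a A > 0" "p a {a} > 0"
    using positive_scf_pos[OF assms, of A a] positive_scf_pos[OF assms, of "{a}" a]
    by (auto simp: menus_def)
  then show "p a A / p a A = p a {a, a} / p a {a, a}" by simp
qed

lemma equiv_p_sym: "equiv_p X p a b \<Longrightarrow> equiv_p X p b a"
  unfolding equiv_p_def
proof (intro ballI impI)
  fix A assume "\<forall>A\<in>menus X. a \<in> A \<longrightarrow> b \<in> A \<longrightarrow> p a A / p b A = p a {a, b} / p b {a, b}"
    and "A \<in> menus X" "b \<in> A" "a \<in> A"
  then have "inverse (p a A / p b A) = inverse (p a {a, b} / p b {a, b})" by simp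
  then show "p b A / p a A = p b {b, a} / p a {b, a}" by (simp add: insert_commute)
qed

lemma equiv_p_odds:
  "equiv_p X p a b \<Longrightarrow> M \<subseteq> X \<Longrightarrow> a \<in> M \<Longrightarrow> b \<in> M \<Longrightarrow> odds p a b M = odds p a b {a, b}"
  unfolding equiv_p_def odds_def menus_def by blast

lemma not_equiv_p_witness:
  assumes "\<not> equiv_p X p a b"
  obtains B where "B \<in> menus X" "a \<in> B" "b \<in> B" "odds p a b {a, b} \<noteq> odds p a b B"
  using assms unfolding equiv_p_def odds_def by force

section \<open>Consequences of ISA-1 and ISA-2\<close>

locale isa_scf =
  fixes X :: "'a set" and p :: "'a \<Rightarrow> 'a set \<Rightarrow> real"
  assumes finite_X: "finite X" and pscf: "positive_scf X p"
    and isa1: "ISA1 X p" and isa2: "ISA2 X p"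
begin

abbreviation E where "E \<equiv> equiv_p X p"

lemma equiv_p_trans:
  assumes ab: "E a b" and bc: "E b c" and bX: "b \<in> X"
  shows "E a c"
proof -
  have through_b: "odds p a c M = odds p a b {a, b} * odds p b c {b, c}"
    if M: "M \<subseteq> X" "a \<in> M" "c \<in> M" for M
  proof -
    have abcX: "{a, c, b} \<subseteq> X" using M bX by auto
    have "odds p a c M = odds p a c (insert b M)"
    proof (cases "b \<in> M")
      case False
      have "odds p a b {a, b} = odds p a b {a, c, b}" "odds p c b {c, b} = odds p c b {a, c, b}"
        using equiv_p_odds[OF ab abcX] equiv_p_odds[OF equiv_p_sym[OF bc] abcX]
        by (simp_all add: insert_commute)
      moreover have "M \<in> menus X" using M by (auto simp: menus_def)
      ultimately show ?thesis
        using isa1[unfolded ISA1_def, rule_format, of M a c b] M False bX by (simp add: odds_def)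
    qed (simp add: insert_absorb)
    also have "\<dots> = odds p a b (insert b M) * odds p b c (insert b M)"
      using odds_trans[OF pscf, of "insert b M" b a c] M bX by simp
    also have "\<dots> = odds p a b {a, b} * odds p b c {b, c}"
      using equiv_p_odds[OF ab, of "insert b M"] equiv_p_odds[OF bc, of "insert b M"] M bX by simp
    finally show ?thesis .
  qed
  show ?thesis
    unfolding equiv_p_def
  proof (intro ballI impI)
    fix A assume A: "A \<in> menus X" "a \<in> A" "c \<in> A"
    then have "{a, c} \<subseteq> X" by (auto simp: menus_def)
    then have "odds p a c A = odds p a c {a, c}"
      using through_b[of A] through_b[of "{a, c}"] A by (auto simp: menus_def)
    then show "p a A / p c A = p a {a, c} / p c {a, c}" by (simp add: odds_def)
  qed
qed

lemma equiv_p_left_cong: "E a b \<Longrightarrow> a \<in> X \<Longrightarrow> b \<in> X \<Longrightarrow> E a c \<longleftrightarrow> E b c"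
  by (meson equiv_p_sym equiv_p_trans)

lemma odds_insert_unrelated:
  assumes M: "M \<subseteq> X" "a \<in> M" "b \<in> M" and "\<not> E a x" "\<not> E b x"
  shows "odds p a b (insert x M) = odds p a b M"
proof (cases "x \<in> M")
  case False
  obtain B where "B \<in> menus X" "a \<in> B" "x \<in> B" "odds p a x {a, x} \<noteq> odds p a x B"
    using not_equiv_p_witness[OF \<open>\<not> E a x\<close>] .
  moreover obtain C where "C \<in> menus X" "b \<in> C" "x \<in> C" "odds p b x {b, x} \<noteq> odds p b x C"
    using not_equiv_p_witness[OF \<open>\<not> E b x\<close>] .
  moreover have "M \<in> menus X" using M by (auto simp: menus_def)
  ultimately have "p a M / p b M = p a (insert x M) / p b (insert x M)"
    using isa2[unfolded ISA2_def, rule_format, of M B C a b x] M by (simp add: odds_def)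
  then show ?thesis by (simp add: odds_def)
qed (simp add: insert_absorb)

lemma odds_superset_unrelated:
  assumes "M \<subseteq> M'" "M' \<subseteq> X" "a \<in> M" "b \<in> M" "\<forall>x \<in> M' - M. \<not> E a x \<and> \<not> E b x"
  shows "odds p a b M' = odds p a b M"
proof -
  have "odds p a b (M \<union> D) = odds p a b M" if "finite D" "D \<subseteq> M' - M" for D
    using that
  proof (induction D rule: finite_induct)
    case (insert x D)
    then have "odds p a b (insert x (M \<union> D)) = odds p a b (M \<union> D)"
      using odds_insert_unrelated[of "M \<union> D" a b x] assms by auto
    with insert show ?case by simp
  qed simp
  moreover have "finite (M' - M)" using finite_X assms(2) finite_subset by blast
  moreover have "M \<union> (M' - M) = M'" using assms(1) by auto
  ultimately show ?thesis by (metis order_refl)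
qed

definition sim :: "('a \<times> 'a) set" where
  "sim = {(a, b). a \<in> X \<and> b \<in> X \<and> E a b}"

lemma sim_iff [simp]: "(a, b) \<in> sim \<longleftrightarrow> a \<in> X \<and> b \<in> X \<and> E a b"
  by (simp add: sim_def)

lemma equiv_sim: "equiv X sim"
proof (rule equivI)
  show "refl_on X sim" using equiv_p_refl[OF pscf] by (auto simp: refl_on_def sim_def)
  show "sym sim" using equiv_p_sym by (auto simp: sym_def sim_def)
  show "trans sim" using equiv_p_trans by (auto simp: trans_def sim_def)
qed (auto simp: sim_def)

lemma not_equiv_p_sim_class: "y \<in> sim `` {c} \<Longrightarrow> \<not> E x c \<Longrightarrow> \<not> E x y"
  using equiv_p_trans[of x y c] equiv_p_sym[of X p c y] by auto

lemma sim_class_eq: "E a b \<Longrightarrow> a \<in> X \<Longrightarrow> b \<in> X \<Longrightarrow> sim `` {b} = sim `` {a}"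
  using equiv_class_eq[OF equiv_sim] by (simp add: sim_def)

lemma sim_quotient_eq_class: "Y \<in> X // sim \<Longrightarrow> a \<in> Y \<Longrightarrow> Y = sim `` {a}"
  by (metis equiv_class_eq equiv_sim quotientE Image_singleton_iff)

end

section \<open>Weights\<close>

locale isa_scf_three_classes = isa_scf +
  fixes e1 e2 e3 :: 'a
  assumes e_in_X: "e1 \<in> X" "e2 \<in> X" "e3 \<in> X"
    and e_unrelated: "\<not> E e1 e2" "\<not> E e2 e3" "\<not> E e1 e3"
begin

lemma exists_unrelated_reference:
  assumes aX: "a \<in> X" and cX: "c \<in> X"
  shows "\<exists>e \<in> {e1, e2, e3}. \<not> E a e \<and> \<not> E c e"
proof -
  have related_to_one: "\<not> E x e \<or> \<not> E x e'" if "x \<in> X" "\<not> E e e'" "e \<in> X" for x e e'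
    using that equiv_p_left_cong[of x e e'] by blast
  \<comment> \<open>each element is related to at most one of the references\<close>
  have "\<not> E x e2 \<and> \<not> E x e3 \<or> \<not> E x e1 \<and> \<not> E x e3 \<or> \<not> E x e1 \<and> \<not> E x e2" if "x \<in> X" for x
    using related_to_one[OF that] e_in_X e_unrelated by blast
  from this[OF aX] this[OF cX] show ?thesis by blast
qed

lemma odds_chain:
  assumes S: "a \<in> S" "S \<subseteq> sim `` {a}" and t: "t \<in> X" "t' \<in> X"
    and unrelated: "\<not> E a t" "\<not> E a t'" "\<not> E t t'"
  shows "odds p a t (insert t S) * odds p t t' {t, t'} = odds p a t' (insert t' S)"
proof -
  define M where "M = insert t (insert t' S)"
  have SX: "S \<subseteq> X" and Sa: "\<forall>s \<in> S. E a s" using S by auto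
  have MX: "M \<subseteq> X" using SX t by (auto simp: M_def)
  have t_S: "\<not> E t s \<and> \<not> E t' s" if "s \<in> S" for s
  proof -
    have "E a s" "a \<in> X" "s \<in> X" using S that by auto
    then have "\<not> E s t" "\<not> E s t'" using unrelated equiv_p_left_cong by blast+
    then show ?thesis using equiv_p_sym[of X p t s] equiv_p_sym[of X p t' s] by blast
  qed
  have "odds p a t M = odds p a t (insert t S)"
    by (rule odds_superset_unrelated) (use SX t S unrelated in \<open>auto simp: M_def\<close>)
  moreover have "odds p a t' M = odds p a t' (insert t' S)"
    by (rule odds_superset_unrelated) (use SX t S unrelated equiv_p_sym[of X p t' t] in \<open>auto simp: M_def\<close>)
  moreover have "odds p t t' M = odds p t t' {t, t'}"
    by (rule odds_superset_unrelated) (use SX t t_S in \<open>auto simp: M_def\<close>)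
  moreover have "odds p a t M * odds p t t' M = odds p a t' M"
    by (rule odds_trans[OF pscf MX]) (simp add: M_def)
  ultimately show ?thesis by simp
qed

lemma pair_odds_chain:
  assumes "x \<in> X" "y \<in> X" "z \<in> X" "\<not> E x y" "\<not> E y z" "\<not> E x z"
  shows "odds p x y {x, y} * odds p y z {y, z} = odds p x z {x, z}"
  using odds_chain[of x "{x}" y z] assms equiv_p_refl[OF pscf] by (simp add: insert_commute)

definition weight :: "'a \<Rightarrow> 'a set \<Rightarrow> real" where
  "weight a S = (if E a e1 then odds p a e2 (insert e2 S) * odds p e2 e1 {e2, e1}
                 else odds p a e1 (insert e1 S))"

lemma weight_pos:
  assumes "a \<in> S" "S \<subseteq> X"
  shows "weight a S > 0"
proof -
  have "odds p a e2 (insert e2 S) > 0" "odds p e2 e1 {e2, e1} > 0" "odds p a e1 (insert e1 S) > 0"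
    using odds_pos[OF pscf, of "insert e2 S" a e2] odds_pos[OF pscf, of "{e2, e1}" e2 e1]
      odds_pos[OF pscf, of "insert e1 S" a e1] assms e_in_X by auto
  then show ?thesis by (simp add: weight_def)
qed

lemma weight_e1: "weight e1 {e1} = 1"
proof -
  have "odds p e1 e2 {e2, e1} > 0" using odds_pos[OF pscf, of "{e2, e1}" e1 e2] e_in_X by simp
  then have "odds p e1 e2 {e2, e1} * odds p e2 e1 {e2, e1} = 1"
    by (simp add: odds_swap[of p e2 e1])
  then show ?thesis using equiv_p_refl[OF pscf, of e1] by (simp add: weight_def insert_commute)
qed

lemma weight_e2: "weight e2 {e2} = odds p e2 e1 {e2, e1}"
proof -
  have "\<not> E e2 e1" using e_unrelated(1) equiv_p_sym[of X p e2 e1] by blast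
  then show ?thesis by (simp add: weight_def insert_commute)
qed

lemma weight_reference:
  assumes "a \<in> S" "S \<subseteq> X"
  obtains r where "r \<in> X" "\<not> E a r" "weight a S = odds p a r (insert r S) * weight r {r}"
proof (cases "E a e1")
  case True
  then have "\<not> E a e2" using equiv_p_left_cong[of a e1 e2] assms e_in_X e_unrelated by auto
  moreover have "weight a S = odds p a e2 (insert e2 S) * weight e2 {e2}"
    unfolding weight_e2 using True by (simp add: weight_def)
  ultimately show ?thesis using that[of e2] e_in_X by blast
next
  case False
  then have "weight a S = odds p a e1 (insert e1 S) * weight e1 {e1}"
    unfolding weight_e1 by (simp add: weight_def)
  with False show ?thesis using that[of e1] e_in_X by blast
qed

text \<open>e1 and e2 are hubs by construction; since binary odds multiply along pairwise unrelated
  triples, every element unrelated to two unrelated hubs is a hub.\<close>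

definition hub :: "'a \<Rightarrow> bool" where
  "hub h \<longleftrightarrow> h \<in> X \<and> (\<forall>x \<in> X. \<not> E x h \<longrightarrow> weight x {x} = odds p x h {x, h} * weight h {h})"

lemma weight_singleton_via_hub:
  assumes "hub k" "x \<in> X" "y \<in> X" "\<not> E x y" "\<not> E y k" "\<not> E x k"
  shows "weight x {x} = odds p x y {x, y} * weight y {y}"
proof -
  have "weight x {x} = odds p x k {x, k} * weight k {k}" using assms unfolding hub_def by blast
  also have "\<dots> = odds p x y {x, y} * (odds p y k {y, k} * weight k {k})"
    using pair_odds_chain[of x y k] assms by (simp add: hub_def)
  also have "odds p y k {y, k} * weight k {k} = weight y {y}" using assms unfolding hub_def by auto
  finally show ?thesis .
qed

lemma hub_e1: "hub e1"
  using e_in_X by (simp add: hub_def weight_e1) (simp add: weight_def insert_commute)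

lemma hub_e2: "hub e2"
  unfolding hub_def
proof (intro conjI ballI impI)
  fix x assume x: "x \<in> X" "\<not> E x e2"
  show "weight x {x} = odds p x e2 {x, e2} * weight e2 {e2}"
  proof (cases "E x e1")
    case True
    then show ?thesis unfolding weight_e2 by (simp add: weight_def insert_commute)
  next
    case False
    have "\<not> E e2 e1" using e_unrelated(1) equiv_p_sym[of X p e2 e1] by blast
    with False show ?thesis
      using weight_singleton_via_hub[OF hub_e1 x(1), of e2] x e_in_X by simp
  qed
qed (use e_in_X in simp)

lemma hub_transfer:
  assumes "hub h1" "hub h2" "\<not> E h1 h2" "h \<in> X" "\<not> E h h1" "\<not> E h h2"
  shows "hub h"
  unfolding hub_def
proof (intro conjI ballI impI)
  fix x assume x: "x \<in> X" "\<not> E x h"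
  have "\<not> E x h1 \<or> \<not> E x h2"
    using equiv_p_left_cong[of x h1 h2] assms x by (auto simp: hub_def)
  then show "weight x {x} = odds p x h {x, h} * weight h {h}"
    using weight_singleton_via_hub[OF assms(1) x(1) assms(4) x(2)]
      weight_singleton_via_hub[OF assms(2) x(1) assms(4) x(2)] assms by blast
qed (rule assms)

lemma hub_reference:
  assumes "e \<in> {e1, e2, e3}"
  shows "hub e"
proof -
  have "hub e3"
    using hub_transfer[OF hub_e1 hub_e2 e_unrelated(1) e_in_X(3)]
      e_unrelated equiv_p_sym[of X p e3 e1] equiv_p_sym[of X p e3 e2] by blast
  then show ?thesis using assms hub_e1 hub_e2 by blast
qed

lemma weight_singleton_cocycle:
  assumes "t \<in> X" "r \<in> X" "\<not> E t r"
  shows "weight t {t} = odds p t r {t, r} * weight r {r}"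
proof -
  obtain e where "e \<in> {e1, e2, e3}" "\<not> E t e" "\<not> E r e"
    using exists_unrelated_reference[OF assms(1,2)] by blast
  then show ?thesis using weight_singleton_via_hub[OF hub_reference] assms by blast
qed

lemma weight_transfer:
  assumes S: "a \<in> S" "S \<subseteq> sim `` {a}" and rt: "r \<in> X" "t \<in> X"
    and unrelated: "\<not> E a r" "\<not> E a t" "\<not> E t r"
    and via_r: "weight a S = odds p a r (insert r S) * weight r {r}"
  shows "weight a S = odds p a t (insert t S) * weight t {t}"
  using via_r odds_chain[OF S rt(2,1) unrelated(2,1,3)] weight_singleton_cocycle[OF rt(2,1) unrelated(3)]
  by (simp add: mult.assoc)

lemma weight_via_unrelated:
  assumes S: "a \<in> S" "S \<subseteq> sim `` {a}" and t: "t \<in> X" "\<not> E a t"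
  shows "weight a S = odds p a t (insert t S) * weight t {t}"
proof -
  have aX: "a \<in> X" and SX: "S \<subseteq> X" using S by auto
  obtain r where r: "r \<in> X" "\<not> E a r" and via_r: "weight a S = odds p a r (insert r S) * weight r {r}"
    using weight_reference[OF S(1) SX] by blast
  show ?thesis
  proof (cases "E t r")
    case False
    then show ?thesis using weight_transfer[OF S r(1) t(1) r(2) t(2) False via_r] by simp
  next
    case True
    obtain s where s: "s \<in> X" "\<not> E a s" "\<not> E t s"
      using exists_unrelated_reference[OF aX t(1)] e_in_X by blast
    have "\<not> E s r"
      using equiv_p_left_cong[of t r s] equiv_p_sym[of X p s r] True s t r by auto
    have "weight a S = odds p a s (insert s S) * weight s {s}"
      by (rule weight_transfer[OF S r(1) s(1) r(2) s(2) \<open>\<not> E s r\<close> via_r])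
    then show ?thesis by (rule weight_transfer[OF S s(1) t(1) s(2) t(2) s(3)])
  qed
qed

lemma odds_distinct_classes:
  assumes A: "A \<subseteq> X" "a \<in> A" "c \<in> A" and ac: "\<not> E a c"
  shows "odds p a c A = weight a (A \<inter> sim `` {a}) / weight c (A \<inter> sim `` {c})"
proof -
  define S where "S = A \<inter> sim `` {a}"
  define T where "T = A \<inter> sim `` {c}"
  have aX: "a \<in> X" and cX: "c \<in> X" using A by auto
  have ca: "\<not> E c a" using ac equiv_p_sym[of X p c a] by blast
  obtain t where tX: "t \<in> X" and at: "\<not> E a t" and ct: "\<not> E c t"
    using exists_unrelated_reference[OF aX cX] e_in_X by blast
  have ta: "\<not> E t a" and tc: "\<not> E t c"
    using at ct equiv_p_sym[of X p t a] equiv_p_sym[of X p t c] by blast+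
  have S: "a \<in> S" "S \<subseteq> sim `` {a}" and T: "c \<in> T" "T \<subseteq> sim `` {c}"
    using A equiv_p_refl[OF pscf] by (auto simp: S_def T_def)
  define M where "M = insert t (S \<union> T)"
  have MX: "M \<subseteq> X" using S T tX by (auto simp: M_def)
  have "odds p a c A = odds p a c (S \<union> T)"
    by (rule odds_superset_unrelated) (use A S T aX cX in \<open>auto simp: S_def T_def\<close>)
  also have "\<dots> = odds p a c M"
    by (rule odds_superset_unrelated[symmetric]) (use MX S T at ct in \<open>auto simp: M_def\<close>)
  also have "\<dots> = odds p a t M / odds p c t M"
    by (rule odds_div[OF pscf MX]) (simp add: M_def)
  also have "odds p a t M = odds p a t (insert t S)"
    by (rule odds_superset_unrelated)
      (use MX S T not_equiv_p_sim_class[OF _ ac] not_equiv_p_sim_class[OF _ tc] in \<open>auto simp: M_def\<close>)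
  also have "odds p c t M = odds p c t (insert t T)"
    by (rule odds_superset_unrelated)
      (use MX S T not_equiv_p_sim_class[OF _ ca] not_equiv_p_sim_class[OF _ ta] in \<open>auto simp: M_def\<close>)
  also have "odds p a t (insert t S) / odds p c t (insert t T) = weight a S / weight c T"
    using weight_via_unrelated[OF S tX at] weight_via_unrelated[OF T tX ct]
      weight_pos[of t "{t}"] tX by simp
  finally show ?thesis by (simp add: S_def T_def)
qed

lemma weight_ratio_same_class:
  assumes S: "a \<in> S" "c \<in> S" "S \<subseteq> sim `` {a}"
  shows "weight a S / weight c S = odds p a c {a, c}"
proof -
  have aX: "a \<in> X" and ac: "E a c" and SX: "S \<subseteq> X" using S by auto
  then have cX: "c \<in> X" using S by auto
  obtain t where tX: "t \<in> X" and at: "\<not> E a t"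
    using exists_unrelated_reference[OF aX aX] e_in_X by blast
  have ct: "\<not> E c t" using equiv_p_left_cong[OF ac aX cX] at by simp
  have S_c: "S \<subseteq> sim `` {c}" using S(3) sim_class_eq[OF ac aX cX] by simp
  have MX: "insert t S \<subseteq> X" using SX tX by simp
  have "weight a S / weight c S = odds p a t (insert t S) / odds p c t (insert t S)"
    using weight_via_unrelated[OF S(1,3) tX at] weight_via_unrelated[OF S(2) S_c tX ct]
      weight_pos[of t "{t}"] tX by simp
  also have "\<dots> = odds p a c (insert t S)" using odds_div[OF pscf MX, of t a c] by simp
  also have "\<dots> = odds p a c {a, c}" by (rule equiv_p_odds[OF ac MX]) (use S in auto)
  finally show ?thesis .
qed

lemma choice_prob_eq_weight:
  assumes A: "A \<subseteq> X" "a \<in> A"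
  shows "p a A = weight a (A \<inter> sim `` {a}) / (\<Sum>c\<in>A. weight c (A \<inter> sim `` {c}))"
proof -
  let ?w = "\<lambda>c. weight c (A \<inter> sim `` {c})"
  have w_pos: "?w c > 0" if "c \<in> A" for c
    using weight_pos[of c "A \<inter> sim `` {c}"] that A equiv_p_refl[OF pscf] by auto
  have cross: "p a A * ?w c = p c A * ?w a" if c: "c \<in> A" for c
  proof -
    have "odds p a c A = ?w a / ?w c"
    proof (cases "E a c")
      case True
      have aX: "a \<in> X" and cX: "c \<in> X" using A c by auto
      have "odds p a c A = odds p a c {a, c}" using equiv_p_odds[OF True A(1,2) c] .
      also have "\<dots> = ?w a / ?w c"
        using weight_ratio_same_class[of a "A \<inter> sim `` {a}" c] sim_class_eq[OF True aX cX]
          True A c aX cX equiv_p_refl[OF pscf] by simp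
      finally show ?thesis .
    qed (use odds_distinct_classes[OF A c] in simp)
    then show ?thesis
      using w_pos[OF c] positive_scf_pos[OF pscf A(1) c] by (simp add: odds_def field_simps)
  qed
  have "p a A * (\<Sum>c\<in>A. ?w c) = (\<Sum>c\<in>A. p c A) * ?w a"
    by (simp add: sum_distrib_left sum_distrib_right cross)
  also have "\<dots> = ?w a" using positive_scf_sum[OF pscf A(1)] A by auto
  finally have "p a A * (\<Sum>c\<in>A. ?w c) = ?w a" .
  moreover have "(\<Sum>c\<in>A. ?w c) > 0"
    using sum_pos[of A ?w] w_pos A finite_subset[OF A(1) finite_X] by blast
  ultimately show ?thesis by (simp add: field_simps)
qed

definition nsc_u :: "'a \<Rightarrow> real" where
  "nsc_u a = weight a (sim `` {a})"

definition nsc_v :: "'a set \<Rightarrow> real" where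
  "nsc_v S = (\<Sum>c\<in>S. weight c S)"

lemma nsc_u_pos: "a \<in> X \<Longrightarrow> nsc_u a > 0"
  unfolding nsc_u_def by (rule weight_pos) (auto simp: equiv_p_refl[OF pscf])

lemma sum_nsc_u_pos: "S \<subseteq> X \<Longrightarrow> S \<noteq> {} \<Longrightarrow> (\<Sum>c\<in>S. nsc_u c) > 0"
  using sum_pos[of S nsc_u] nsc_u_pos finite_subset[OF _ finite_X] by blast

lemma weight_eq_nsc_u_ratio:
  assumes S: "a \<in> S" "c \<in> S" "S \<subseteq> sim `` {a}"
  shows "weight c S = weight a S * nsc_u c / nsc_u a"
proof -
  have aX: "a \<in> X" and cX: "c \<in> X" and ac: "E a c" and SX: "S \<subseteq> X" using S by auto
  have in_class: "a \<in> sim `` {a}" "c \<in> sim `` {a}" using aX cX ac equiv_p_refl[OF pscf] by auto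
  have "weight a S / weight c S = nsc_u a / nsc_u c"
    using weight_ratio_same_class[OF S] weight_ratio_same_class[OF in_class order_refl]
      sim_class_eq[OF ac aX cX] by (simp add: nsc_u_def)
  moreover have "weight a S > 0" "weight c S > 0" "nsc_u a > 0" "nsc_u c > 0"
    using weight_pos[OF S(1) SX] weight_pos[OF S(2) SX] nsc_u_pos aX cX by auto
  ultimately show ?thesis by (simp add: field_simps)
qed

lemma nsc_v_eq:
  assumes "a \<in> S" "S \<subseteq> sim `` {a}"
  shows "nsc_v S = weight a S * (\<Sum>c\<in>S. nsc_u c) / nsc_u a"
proof -
  have "nsc_v S = (\<Sum>c\<in>S. weight a S / nsc_u a * nsc_u c)"
    unfolding nsc_v_def using weight_eq_nsc_u_ratio[OF assms(1) _ assms(2)] by simp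
  then show ?thesis by (simp add: sum_distrib_left sum_divide_distrib)
qed

lemma sum_classes_nsc_v:
  assumes A: "A \<subseteq> X"
  shows "(\<Sum>Z\<in>X // sim. nsc_v (A \<inter> Z)) = (\<Sum>c\<in>A. weight c (A \<inter> sim `` {c}))"
proof -
  have "(\<Sum>Z\<in>X // sim. nsc_v (A \<inter> Z)) = (\<Sum>Z\<in>X // sim. \<Sum>c\<in>A \<inter> Z. weight c (A \<inter> sim `` {c}))"
    unfolding nsc_v_def using sim_quotient_eq_class by (intro sum.cong) auto
  also have "\<dots> = (\<Sum>c\<in>(\<Union>Z\<in>X // sim. A \<inter> Z). weight c (A \<inter> sim `` {c}))"
  proof (rule sum.UNION_disjoint[symmetric])
    show "finite (X // sim)" using finite_X by (simp add: finite_quotient equiv_type[OF equiv_sim])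
    show "\<forall>Z\<in>X // sim. finite (A \<inter> Z)" using finite_subset[OF A finite_X] by blast
    show "\<forall>Y\<in>X // sim. \<forall>Z\<in>X // sim. Y \<noteq> Z \<longrightarrow> A \<inter> Y \<inter> (A \<inter> Z) = {}"
      using quotient_disj[OF equiv_sim] by blast
  qed
  also have "(\<Union>Z\<in>X // sim. A \<inter> Z) = A" using Union_quotient[OF equiv_sim] A by auto
  finally show ?thesis .
qed

lemma NSC_rep_nsc: "NSC_rep X p (X // sim) nsc_u nsc_v"
  unfolding NSC_rep_def
proof (intro conjI ballI allI impI)
  show "partition_on X (X // sim)" by (rule partition_on_quotient[OF equiv_sim])
  show "nsc_u x > 0" if "x \<in> X" for x using nsc_u_pos[OF that] .
  show "nsc_v {} = 0" by (simp add: nsc_v_def)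
next
  fix Y S assume "Y \<in> X // sim" "S \<subseteq> Y"
  then have "S \<subseteq> X" using Union_quotient[OF equiv_sim] by auto
  then show "nsc_v S \<ge> 0"
    unfolding nsc_v_def using weight_pos[of _ S] by (intro sum_nonneg) (simp add: less_imp_le)
next
  fix A Y a assume A: "A \<in> menus X" and Y: "Y \<in> X // sim" and a: "a \<in> A \<inter> Y"
  have AX: "A \<subseteq> X" using A by (simp add: menus_def)
  define S where "S = A \<inter> sim `` {a}"
  have AY: "A \<inter> Y = S" using sim_quotient_eq_class[OF Y] a by (simp add: S_def)
  have S: "a \<in> S" "S \<subseteq> sim `` {a}" using a AX equiv_p_refl[OF pscf] by (auto simp: S_def)
  have "S \<subseteq> X" "a \<in> X" using S by auto
  then have "(\<Sum>c\<in>S. nsc_u c) > 0" "nsc_u a > 0"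
    using sum_nsc_u_pos[of S] nsc_u_pos[of a] S(1) by auto
  then have "nsc_v S * (nsc_u a / (\<Sum>c\<in>S. nsc_u c)) = weight a S"
    using nsc_v_eq[OF S] by simp
  then have "nsc_v S / D * (nsc_u a / (\<Sum>c\<in>S. nsc_u c)) = weight a S / D" for D
    by (simp only: times_divide_eq_left)
  then show "p a A = nsc_v (A \<inter> Y) / (\<Sum>Z\<in>X // sim. nsc_v (A \<inter> Z)) * (nsc_u a / (\<Sum>b\<in>A \<inter> Y. nsc_u b))"
    unfolding AY sum_classes_nsc_v[OF AX] using choice_prob_eq_weight[OF AX, of a] a by (simp add: S_def)
qed

lemma weight_insert_same_class:
  assumes S: "a \<in> S" "S \<subseteq> sim `` {a}" and x: "x \<in> sim `` {a}" "x \<notin> S"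
    and singleton: "weight x {a, x} = weight x {x}"
  shows "weight a (insert x S) = weight a S"
proof -
  have aX: "a \<in> X" and xX: "x \<in> X" and ax: "E a x" and SX: "S \<subseteq> X" using S x by auto
  obtain t where tX: "t \<in> X" and xt: "\<not> E x t"
    using exists_unrelated_reference[OF xX xX] e_in_X by blast
  have at: "\<not> E a t" using equiv_p_left_cong[OF ax aX xX] xt by simp
  have tx: "t \<noteq> x" using xt equiv_p_refl[OF pscf] by auto
  have ax_class: "{a, x} \<subseteq> sim `` {x}" "{x} \<subseteq> sim `` {x}"
    using sim_class_eq[OF ax aX xX] S(1,2) x(1) by auto
  have "weight x {a, x} = odds p x t {t, a, x} * weight t {t}"
    using weight_via_unrelated[OF _ ax_class(1) tX xt] by simp
  moreover have "weight x {x} = odds p x t {t, x} * weight t {t}"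
    using weight_via_unrelated[OF _ ax_class(2) tX xt] by simp
  moreover have "{t, a, x} = {a, t, x}" by auto
  ultimately have "odds p x t {a, t, x} = odds p x t {t, x}"
    using singleton weight_pos[of t "{t}"] tX by simp
  \<comment> \<open>so adding a does not change the odds of t against x: the hypothesis of ISA-1\<close>
  then have "odds p t x {t, x} = odds p t x {a, t, x}" by (simp add: odds_swap[of p t x])
  moreover have "odds p a x {a, x} = odds p a x {a, t, x}"
    using equiv_p_odds[OF ax, of "{a, t, x}"] aX xX tX by simp
  moreover have "insert t S \<in> menus X" using SX tX by (auto simp: menus_def)
  ultimately have "odds p a t (insert t S) = odds p a t (insert x (insert t S))"
    using isa1[unfolded ISA1_def, rule_format, of "insert t S" a t x] S(1) xX x(2) tx
    by (simp add: odds_def)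
  then show ?thesis
    using weight_via_unrelated[OF S tX at] weight_via_unrelated[of a "insert x S" t] S x tX at
    by (simp add: insert_commute)
qed

lemma NSC_strict_nsc: "NSC_strict (X // sim) nsc_u nsc_v"
  unfolding NSC_strict_def
proof (intro ballI allI impI)
  fix Y S a x
  assume Y: "Y \<in> X // sim" and S: "S \<subseteq> Y" "a \<in> S" and x: "x \<in> Y - S"
    and premise: "(nsc_u a + nsc_u x) / nsc_u x = nsc_v {a, x} / nsc_v {x}"
  have Ya: "Y = sim `` {a}" using sim_quotient_eq_class[OF Y] S by blast
  have aX: "a \<in> X" and xX: "x \<in> X" and ax: "E a x" using Ya S x by auto
  have xa: "x \<noteq> a" using x S by auto
  have u_pos: "nsc_u a > 0" "nsc_u x > 0" using nsc_u_pos aX xX by auto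
  have "nsc_v {a, x} = weight x {a, x} * (nsc_u a + nsc_u x) / nsc_u x"
    using nsc_v_eq[of x "{a, x}"] sim_class_eq[OF ax aX xX] Ya S x xa by auto
  moreover have "nsc_v {x} = weight x {x}" by (simp add: nsc_v_def)
  ultimately have "(nsc_u a + nsc_u x) * weight x {a, x} = (nsc_u a + nsc_u x) * weight x {x}"
    using premise u_pos weight_pos[of x "{x}"] xX by (auto simp: field_simps)
  then have "weight x {a, x} = weight x {x}" using u_pos by simp
  then have w: "weight a (insert x S) = weight a S"
    using weight_insert_same_class[of a S x] S x Ya by auto
  have SX: "S \<subseteq> X" using S Ya by auto
  then have "finite S" using finite_subset[OF _ finite_X] by blast
  then have v_insert: "nsc_v (insert x S) = weight a S * ((\<Sum>c\<in>S. nsc_u c) + nsc_u x) / nsc_u a"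
    using nsc_v_eq[of a "insert x S"] w S x Ya by (simp add: add.commute)
  moreover have v: "nsc_v S = weight a S * (\<Sum>c\<in>S. nsc_u c) / nsc_u a"
    using nsc_v_eq[of a S] S Ya by auto
  moreover have "(\<Sum>c\<in>S. nsc_u c) > 0" "weight a S > 0"
    using sum_nsc_u_pos[OF SX] weight_pos[OF S(2) SX] S(2) by auto
  ultimately show "((\<Sum>a'\<in>S. nsc_u a') + nsc_u x) / (\<Sum>a'\<in>S. nsc_u a') = nsc_v (insert x S) / nsc_v S"
    unfolding v_insert v using u_pos by (simp add: field_simps)
qed

lemma degenerate_block_weight:
  assumes Y: "Y \<in> X // sim" and degenerate: "NSC_degenerate_block nsc_u nsc_v Y"
  obtains a where "a \<in> Y" "\<And>S. S \<subseteq> Y \<Longrightarrow> a \<in> S \<Longrightarrow> weight a S = weight a {a}"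
proof -
  obtain a where a: "a \<in> Y"
    and ratio: "\<And>S. S \<subseteq> Y \<Longrightarrow> a \<in> S \<Longrightarrow> (\<Sum>x\<in>S. nsc_u x) / nsc_v S = nsc_u a / nsc_v {a}"
    using degenerate unfolding NSC_degenerate_block_def by blast
  have "weight a S = weight a {a}" if S: "S \<subseteq> Y" "a \<in> S" for S
  proof -
    have Ya: "Y = sim `` {a}" using sim_quotient_eq_class[OF Y a] .
    have SX: "S \<subseteq> X" and aX: "a \<in> X" using S Ya by auto
    have pos: "(\<Sum>x\<in>S. nsc_u x) > 0" "nsc_u a > 0" "weight a S > 0" "weight a {a} > 0"
      using sum_nsc_u_pos[OF SX] nsc_u_pos[OF aX] weight_pos[OF S(2) SX] weight_pos[of a "{a}"] S aX
      by auto
    have "(\<Sum>x\<in>S. nsc_u x) / nsc_v S = nsc_u a / weight a S"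
      using nsc_v_eq[of a S] S Ya pos by simp
    moreover have "nsc_v {a} = weight a {a}" by (simp add: nsc_v_def)
    ultimately have "nsc_u a / weight a S = nsc_u a / weight a {a}" using ratio[OF S] by metis
    then show ?thesis using pos by (simp add: field_simps)
  qed
  then show ?thesis using that a by blast
qed

lemma NSC_nondegenerate_nsc: "NSC_nondegenerate (X // sim) nsc_u nsc_v"
  unfolding NSC_nondegenerate_def
proof (intro ballI impI)
  fix Y Z
  assume Y: "Y \<in> X // sim" "NSC_degenerate_block nsc_u nsc_v Y"
    and Z: "Z \<in> X // sim" "NSC_degenerate_block nsc_u nsc_v Z"
  obtain a where a: "a \<in> Y" and wa: "\<And>S. S \<subseteq> Y \<Longrightarrow> a \<in> S \<Longrightarrow> weight a S = weight a {a}"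
    using degenerate_block_weight[OF Y] by blast
  obtain b where b: "b \<in> Z" and wb: "\<And>S. S \<subseteq> Z \<Longrightarrow> b \<in> S \<Longrightarrow> weight b S = weight b {b}"
    using degenerate_block_weight[OF Z] by blast
  have Ya: "Y = sim `` {a}" and Zb: "Z = sim `` {b}"
    using sim_quotient_eq_class Y(1) Z(1) a b by auto
  have aX: "a \<in> X" and bX: "b \<in> X" using a b Ya Zb by auto
  have "E a b"
  proof (rule ccontr)
    assume nab: "\<not> E a b"
    have "odds p a b M = weight a {a} / weight b {b}" if M: "M \<subseteq> X" "a \<in> M" "b \<in> M" for M
      using odds_distinct_classes[OF M nab] wa[of "M \<inter> sim `` {a}"] wb[of "M \<inter> sim `` {b}"]
        Ya Zb M aX bX equiv_p_refl[OF pscf] by auto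
    then have "odds p a b M = odds p a b {a, b}" if "M \<in> menus X" "a \<in> M" "b \<in> M" for M
      using that aX bX by (simp add: menus_def)
    then have "E a b" unfolding equiv_p_def odds_def by blast
    with nab show False ..
  qed
  then show "Y = Z" using Ya Zb sim_class_eq[of a b] aX bX by auto
qed

lemma NSC_of_ISA: "strict_nondegenerate_NSC X p"
  unfolding strict_nondegenerate_NSC_def
  using NSC_rep_nsc NSC_nondegenerate_nsc NSC_strict_nsc by blast

end

section \<open>An NSC satisfies ISA-1 and ISA-2\<close>

locale nsc_scf =
  fixes X :: "'a set" and p :: "'a \<Rightarrow> 'a set \<Rightarrow> real"
    and P :: "'a set set" and u :: "'a \<Rightarrow> real" and v :: "'a set \<Rightarrow> real"
  assumes finite_X: "finite X" and pscf: "positive_scf X p"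
    and rep: "NSC_rep X p P u v" and strict: "NSC_strict P u v"
begin

lemma partition: "partition_on X P"
  and u_pos: "x \<in> X \<Longrightarrow> u x > 0"
  and v_nonneg: "Y \<in> P \<Longrightarrow> S \<subseteq> Y \<Longrightarrow> v S \<ge> 0"
  and choice_prob_rep: "A \<in> menus X \<Longrightarrow> Y \<in> P \<Longrightarrow> a \<in> A \<inter> Y \<Longrightarrow>
    p a A = v (A \<inter> Y) / (\<Sum>Z\<in>P. v (A \<inter> Z)) * (u a / (\<Sum>b\<in>A \<inter> Y. u b))"
  using rep unfolding NSC_rep_def by simp_all

definition block :: "'a \<Rightarrow> 'a set" where
  "block a = (THE Y. Y \<in> P \<and> a \<in> Y)"

lemma block_eq: "Y \<in> P \<Longrightarrow> a \<in> Y \<Longrightarrow> block a = Y"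
  unfolding block_def
  by (rule the_equality) (use partition_onD2[OF partition] in \<open>auto dest: disjointD\<close>)

lemma block_in_P: "a \<in> X \<Longrightarrow> block a \<in> P"
  and in_block: "a \<in> X \<Longrightarrow> a \<in> block a"
  using block_eq partition_onD1[OF partition] by auto

lemma mem_block_iff: "a \<in> X \<Longrightarrow> x \<in> block a \<longleftrightarrow> x \<in> X \<and> block x = block a"
  using block_eq[OF block_in_P] in_block partition_onD1[OF partition] block_in_P by blast

definition score :: "'a \<Rightarrow> 'a set \<Rightarrow> real" where
  "score a A = v (A \<inter> block a) * u a / (\<Sum>b\<in>A \<inter> block a. u b)"

definition total :: "'a set \<Rightarrow> real" where
  "total A = (\<Sum>Z\<in>P. v (A \<inter> Z))"

lemma choice_prob_score:
  assumes "A \<subseteq> X" "a \<in> A"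
  shows "p a A = score a A / total A"
proof -
  have "A \<in> menus X" "block a \<in> P" "a \<in> A \<inter> block a"
    using assms block_in_P in_block by (auto simp: menus_def)
  then show ?thesis using choice_prob_rep by (simp add: score_def total_def mult.commute)
qed

lemma total_pos: 
  assumes "A \<subseteq> X" "a \<in> A"
  shows "total A > 0"
proof -
  have "total A \<ge> 0" unfolding total_def by (intro sum_nonneg v_nonneg) auto
  moreover have "total A \<noteq> 0" using choice_prob_score[OF assms] positive_scf_pos[OF pscf assms] by auto
  ultimately show ?thesis by simp
qed

lemma score_pos: "A \<subseteq> X \<Longrightarrow> a \<in> A \<Longrightarrow> score a A > 0"
  using choice_prob_score positive_scf_pos[OF pscf] total_pos by (fastforce simp: field_simps)

lemma odds_score: "A \<subseteq> X \<Longrightarrow> a \<in> A \<Longrightarrow> b \<in> A \<Longrightarrow> odds p a b A = score a A / score b A"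
  using choice_prob_score[of A a] choice_prob_score[of A b] total_pos[of A a] by (simp add: odds_def)

lemma odds_same_block:
  assumes A: "A \<subseteq> X" "a \<in> A" "b \<in> A" and ab: "block a = block b"
  shows "odds p a b A = u a / u b"
proof -
  have "v (A \<inter> block a) \<noteq> 0" "(\<Sum>c\<in>A \<inter> block a. u c) \<noteq> 0"
    using score_pos[OF A(1,2)] by (auto simp: score_def)
  then show ?thesis using odds_score[OF A] ab u_pos[of b] A by (simp add: score_def)
qed

lemma score_insert_other_block: "x \<notin> block a \<Longrightarrow> score a (insert x A) = score a A"
  unfolding score_def by (simp add: Int_insert_left)

lemma ISA2_of_NSC: "ISA2 X p"
  unfolding ISA2_def
proof (intro ballI impI)
  fix A B C a b x
  assume menus: "A \<in> menus X" "B \<in> menus X" "C \<in> menus X"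
    and a: "a \<in> A \<inter> B" and b: "b \<in> A \<inter> C" and x: "x \<in> B \<inter> C"
    and a_affected: "p a {a, x} / p x {a, x} \<noteq> p a B / p x B"
    and b_affected: "p b {b, x} / p x {b, x} \<noteq> p b C / p x C"
  have AX: "A \<subseteq> X" "B \<subseteq> X" "C \<subseteq> X" using menus by (auto simp: menus_def)
  have aX: "a \<in> X" and bX: "b \<in> X" and xX: "x \<in> X" using a b x AX by auto
  \<comment> \<open>Within a block the odds are menu-independent, so the hypotheses force x into other blocks.\<close>
  have "block x \<noteq> block a"
    using a_affected odds_same_block[of "{a, x}" a x] odds_same_block[of B a x] AX a x aX xX
    by (auto simp: odds_def)
  moreover have "block x \<noteq> block b"
    using b_affected odds_same_block[of "{b, x}" b x] odds_same_block[of C b x] AX b x bX xX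
    by (auto simp: odds_def)
  ultimately have "x \<notin> block a" "x \<notin> block b" using mem_block_iff aX bX by auto
  then have "odds p a b A = odds p a b (insert x A)"
    using odds_score[of A a b] odds_score[of "insert x A" a b] AX a b xX
      score_insert_other_block by auto
  then show "p a A / p b A = p a (insert x A) / p b (insert x A)" by (simp add: odds_def)
qed

lemma strict_premise_of_odds:
  assumes A: "A \<subseteq> X" "c \<in> A" "d \<in> A" and cd: "block c \<noteq> block d"
    and x: "x \<in> X" "x \<notin> A" "block x = block c"
    and unaffected: "odds p d x {d, x} = odds p d x {c, d, x}"
  shows "(u c + u x) / u x = v {c, x} / v {x}"
proof -
  have cX: "c \<in> X" and dX: "d \<in> X" using A by auto
  have xc: "x \<noteq> c" using x A by auto
  have d_block: "{d, x} \<inter> block d = {d}" "{c, d, x} \<inter> block d = {d}"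
    using mem_block_iff[OF dX] cd x cX in_block[OF dX] by auto
  have x_block: "{d, x} \<inter> block x = {x}" "{c, d, x} \<inter> block x = {c, x}"
    using mem_block_iff[OF x(1)] cd x cX dX in_block[OF x(1)] by auto
  have u: "u c > 0" "u x > 0" using u_pos cX x by auto
  have "v {d} > 0"
    using score_pos[of "{d, x}" d] v_nonneg[OF block_in_P[OF dX], of "{d}"] in_block[OF dX]
      d_block u_pos[OF dX] dX x by (auto simp: score_def)
  moreover have "score d {d, x} = v {d}" "score d {c, d, x} = v {d}"
    using d_block u_pos[OF dX] by (auto simp: score_def)
  moreover have "score d {d, x} / score x {d, x} = score d {c, d, x} / score x {c, d, x}"
    using unaffected odds_score[of "{d, x}" d x] odds_score[of "{c, d, x}" d x] cX dX x by simp
  ultimately have "score x {d, x} = score x {c, d, x}" by simp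
  moreover have "score x {d, x} = v {x}" "score x {c, d, x} = v {c, x} * u x / (u c + u x)"
    using x_block xc u by (auto simp: score_def)
  moreover have "score x {d, x} > 0" using score_pos[of "{d, x}" x] dX x by simp
  ultimately show ?thesis using u by (simp add: field_simps)
qed

lemma score_insert_same_block:
  assumes A: "A \<subseteq> X" "c \<in> A" and x: "x \<in> X" "x \<notin> A" "block x = block c"
    and premise: "(u c + u x) / u x = v {c, x} / v {x}"
  shows "score c (insert x A) = score c A"
proof -
  define S where "S = A \<inter> block c"
  have cX: "c \<in> X" using A by auto
  have S: "S \<subseteq> block c" "c \<in> S" "x \<in> block c - S"
    using A x in_block[OF cX] in_block[OF x(1)] by (auto simp: S_def)
  have "finite S" using finite_subset[OF _ finite_X] A by (auto simp: S_def)
  then have sum_insert: "(\<Sum>b\<in>insert x S. u b) = (\<Sum>b\<in>S. u b) + u x" using S by simp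
  have "(\<Sum>b\<in>S. u b) > 0" using sum_pos[OF \<open>finite S\<close>, of u] S A u_pos by (auto simp: S_def)
  moreover have "v S > 0"
    using score_pos[OF A] \<open>(\<Sum>b\<in>S. u b) > 0\<close> u_pos[OF cX]
    by (auto simp: score_def S_def zero_less_mult_iff zero_less_divide_iff)
  moreover have "((\<Sum>b\<in>S. u b) + u x) / (\<Sum>b\<in>S. u b) = v (insert x S) / v S"
    using strict block_in_P[OF cX] S premise unfolding NSC_strict_def by blast
  ultimately have v_insert: "v (insert x S) = v S * ((\<Sum>b\<in>S. u b) + u x) / (\<Sum>b\<in>S. u b)"
    by (simp add: field_simps)
  have "insert x A \<inter> block c = insert x S" "A \<inter> block c = S" using S by (auto simp: S_def)
  then have "score c (insert x A) = v (insert x S) * u c / ((\<Sum>b\<in>S. u b) + u x)"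
    "score c A = v S * u c / (\<Sum>b\<in>S. u b)"
    unfolding score_def using sum_insert by simp_all
  moreover have "(\<Sum>b\<in>S. u b) + u x > 0" using \<open>(\<Sum>b\<in>S. u b) > 0\<close> u_pos[OF x(1)] by simp
  ultimately show ?thesis
    unfolding v_insert using \<open>(\<Sum>b\<in>S. u b) > 0\<close> by simp
qed

lemma ISA1_of_NSC: "ISA1 X p"
  unfolding ISA1_def
proof (intro ballI impI)
  fix A a b x
  assume A: "A \<in> menus X" and a: "a \<in> A" and b: "b \<in> A" and x: "x \<in> X" "x \<notin> A"
    and a_unaffected: "p a {a, x} / p x {a, x} = p a {a, b, x} / p x {a, b, x}"
    and b_unaffected: "p b {b, x} / p x {b, x} = p b {a, b, x} / p x {a, b, x}"
  have AX: "A \<subseteq> X" and AxX: "insert x A \<subseteq> X" using A x by (auto simp: menus_def)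
  have aX: "a \<in> X" and bX: "b \<in> X" using a b AX by auto
  have "odds p a b A = odds p a b (insert x A)"
  proof (cases "block a = block b")
    case True
    then show ?thesis using odds_same_block[OF AX a b] odds_same_block[OF AxX] a b by simp
  next
    case False
    have score_unchanged: "score c (insert x A) = score c A"
      if c: "c \<in> A" "d \<in> A" "block c \<noteq> block d"
        and d_unaffected: "odds p d x {d, x} = odds p d x {c, d, x}" for c d
    proof (cases "block x = block c")
      case True
      show ?thesis
        by (rule score_insert_same_block[OF AX c(1) x True
              strict_premise_of_odds[OF AX c x True d_unaffected]])
    next
      case False
      then have "x \<notin> block c" using mem_block_iff[of c x] AX c by auto
      then show ?thesis by (rule score_insert_other_block)
    qed
    have "score a (insert x A) = score a A"
      using score_unchanged[OF a b False] b_unaffected by (simp add: odds_def)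
    moreover have "score b (insert x A) = score b A"
      using score_unchanged[OF b a] False a_unaffected by (simp add: odds_def insert_commute)
    ultimately show ?thesis using odds_score[OF AX a b] odds_score[OF AxX] a b by simp
  qed
  then show "p a A / p b A = p a (insert x A) / p b (insert x A)" by (simp add: odds_def)
qed

end

theorem theorem5:
  fixes X :: "'a set" and p :: "'a \<Rightarrow> 'a set \<Rightarrow> real"
  assumes "finite X"
    and "positive_scf X p"
    and "\<exists>a\<in>X. \<exists>b\<in>X. \<exists>c\<in>X.
           \<not> equiv_p X p a b \<and> \<not> equiv_p X p b c \<and> \<not> equiv_p X p a c"
  shows "ISA1 X p \<and> ISA2 X p \<longleftrightarrow> strict_nondegenerate_NSC X p"
proof
  assume "ISA1 X p \<and> ISA2 X p"
  moreover obtain a b c where "a \<in> X" "b \<in> X" "c \<in> X"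
    "\<not> equiv_p X p a b" "\<not> equiv_p X p b c" "\<not> equiv_p X p a c"
    using assms(3) by blast
  ultimately interpret isa_scf_three_classes X p a b c
    using assms(1,2) by unfold_locales auto
  show "strict_nondegenerate_NSC X p" by (rule NSC_of_ISA)
next
  assume "strict_nondegenerate_NSC X p"
  then obtain P u v where "NSC_rep X p P u v" "NSC_strict P u v"
    unfolding strict_nondegenerate_NSC_def by blast
  then interpret nsc_scf X p P u v
    using assms(1,2) by unfold_locales
  show "ISA1 X p \<and> ISA2 X p" using ISA1_of_NSC ISA2_of_NSC by blast
qed

end
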